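(* Let $\mathbb{T}$ be a time scale and $f:\mathbb{T}\to\mathbb{R}$, $f(t)=t$. Then for $\alpha\in]0,1]$ and $t\in\mathbb{T}_\kappa$, $$f^{\nabla^\alpha}(t)=\begin{cases}[t-\rho(t)]^{1-\alpha}&\text{if }\alpha\neq1,\\ 1&\text{if }\alpha=1.\end{cases}$$
   Context: A time scale $\mathbb{T}$ is a nonempty closed subset of $\mathbb{R}$. $\rho(t)=\sup\{s\in\mathbb{T}: s<t\}$ (with $\sup\emptyset=\inf\mathbb{T}$), $\sigma(t)=\inf\{s\in\mathbb{T}:s>t\}$ (with $\inf\emptyset=\sup\mathbb{T}$), $f^\rho=f\circ\rho$. $\mathbb{T}_\kappa=\mathbb{T}\setminus\{\inf\mathbb{T}\}$ if $\inf\mathbb{T}$ is finite with $\sigma(\inf\mathbb{T})>\inf\mathbb{T}$, otherwise $\mathbb{T}_\kappa=\mathbb{T}$. $0^{\gamma}=0$ for $\gamma>0$. Let $A=\,]0,1]\cap\{1/q: q\text{ odd positive integer}\}$; for $\alpha=1/q\in A$, $x^\alpha$ is the real $q$-th root. For $t\in\mathbb{T}_\kappa$, $f^{\nabla^\alpha}(t)$ is the real number (if it exists) such that for every $\varepsilon>0$ there is $\delta>0$ with $\big|[f(s)-f^\rho(t)]-f^{\nabla^\alpha}(t)[s-\rho(t)]^\alpha\big|\le\varepsilon|s-\rho(t)|^\alpha$ for all $s\in\,]t-\delta,t+\delta[\,\cap\mathbb{T}$ if $\alpha\in A$, resp. all $s\in[t,t+\delta[\,\cap\mathbb{T}$ if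 $\alpha\notin A$ (the nabla fractional derivative of order $\alpha$). *)

theory Defs
  imports "HOL-Analysis.Analysis"
begin

definition time_scale :: "real set \<Rightarrow> bool" where
  "time_scale T \<longleftrightarrow> T \<noteq> {} \<and> closed T"

definition rho :: "real set \<Rightarrow> real \<Rightarrow> real" where
  "rho T t = (if {s \<in> T. s < t} = {} then Inf T else Sup {s \<in> T. s < t})"

definition sigma :: "real set \<Rightarrow> real \<Rightarrow> real" where
  "sigma T t = (if {s \<in> T. t < s} = {} then Sup T else Inf {s \<in> T. t < s})"

definition T_kappa :: "real set \<Rightarrow> real set" where
  "T_kappa T = (if bdd_below T \<and> sigma T (Inf T) > Inf T then T - {Inf T} else T)"

definition Aset :: "real set" where
  "Aset = {a. a \<in> {0<..1} \<and> (\<exists>q::nat. odd q \<and> q > 0 \<and> a = 1 / real q)}"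

definition fpow :: "real \<Rightarrow> real \<Rightarrow> real" where
  "fpow \<alpha> x = (if \<alpha> \<in> Aset then root (nat (round (1 / \<alpha>))) x else x powr \<alpha>)"

definition has_nabla_frac_deriv ::
  "real set \<Rightarrow> real \<Rightarrow> (real \<Rightarrow> real) \<Rightarrow> real \<Rightarrow> real \<Rightarrow> bool" where
  "has_nabla_frac_deriv T \<alpha> f t D \<longleftrightarrow>
     (\<forall>\<epsilon>>0. \<exists>\<delta>>0. \<forall>s\<in>T.
        (if \<alpha> \<in> Aset then t - \<delta> < s \<and> s < t + \<delta> else t \<le> s \<and> s < t + \<delta>) \<longrightarrow>
        \<bar>(f s - f (rho T t)) - D * fpow \<alpha> (s - rho T t)\<bar>
          \<le> \<epsilon> * (\<bar>s - rho T t\<bar> powr \<alpha>))"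

end

theory Submission
  imports Defs
begin

text \<open>
  Write \<open>r = rho T t\<close>.  For \<open>\<alpha> = 1\<close> the increment \<open>s - r\<close> is reproduced exactly.
  For \<open>\<alpha> < 1\<close> and left-dense \<open>t\<close> one has \<open>|s - t| \<le> \<epsilon> |s - t| powr \<alpha>\<close> as soon as
  \<open>|s - t| \<le> \<epsilon> powr (1 / (1 - \<alpha>))\<close>, so the derivative is \<open>0 = (t - r) powr (1 - \<alpha>)\<close>.
  For left-scattered \<open>t\<close> with gap \<open>h = t - r\<close>, the points of \<open>T\<close> near \<open>t\<close> satisfy
  \<open>s \<ge> t\<close>, hence \<open>s - r \<ge> h\<close>; the error \<open>(s - r) - h powr (1 - \<alpha>) * (s - r) powr \<alpha>\<close> is
  continuous and vanishes at \<open>t\<close>, so near \<open>t\<close> it is below \<open>\<epsilon> h powr \<alpha> \<le> \<epsilon> |s - r| powr \<alpha>\<close>.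
\<close>

lemma fpow_pos:
  assumes "x > 0" shows "fpow \<alpha> x = x powr \<alpha>"
proof (cases "\<alpha> \<in> Aset")
  case True
  from True obtain q :: nat where q: "odd q" "q > 0" "\<alpha> = 1 / real q"
    unfolding Aset_def by auto
  have "nat (round (1 / \<alpha>)) = q" using q by simp
  then show ?thesis using True q assms by (simp add: fpow_def root_powr_inverse)
next
  case False
  then show ?thesis by (simp add: fpow_def)
qed

lemma fpow_one [simp]: "fpow 1 x = x"
proof -
  have "1 \<in> Aset" unfolding Aset_def by (auto intro!: exI[of _ 1])
  then show ?thesis by (simp add: fpow_def)
qed

lemma T_kappa_subset: "T_kappa T \<subseteq> T"
  unfolding T_kappa_def by auto

lemma rho_le: assumes "t \<in> T" shows "rho T t \<le> t"
proof (cases "{s \<in> T. s < t} = {}")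
  case True
  then have "\<forall>s\<in>T. t \<le> s" by auto
  then have "Inf T = t" using assms by (meson cInf_eq_minimum)
  then show ?thesis using True by (simp add: rho_def)
next
  case False
  then show ?thesis unfolding rho_def by (auto intro: cSup_least)
qed

lemma le_rho: assumes "s \<in> T" "s < t" shows "s \<le> rho T t"
proof -
  have "bdd_above {s \<in> T. s < t}" by (rule bdd_aboveI[of _ t]) auto
  then show ?thesis using assms unfolding rho_def by (auto intro: cSup_upper)
qed

lemma ge_if_dist_lt_left_gap:
  assumes "s \<in> T" "\<bar>s - t\<bar> < t - rho T t"
  shows "t \<le> s"
proof (rule ccontr)
  assume "\<not> t \<le> s"
  then have "s \<le> rho T t" using le_rho[OF assms(1)] by simp
  then show False using assms(2) by linarith
qed

text \<open>Both admissible neighbourhoods in the definition lie inside \<open>]t - \<delta>, t + \<delta>[\<close>.\<close>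

lemma has_nabla_frac_derivI:
  assumes "\<And>\<epsilon>. \<epsilon> > 0 \<Longrightarrow> \<exists>\<delta>>0. \<forall>s\<in>T. \<bar>s - t\<bar> < \<delta> \<longrightarrow>
             \<bar>(f s - f (rho T t)) - D * fpow \<alpha> (s - rho T t)\<bar> \<le> \<epsilon> * \<bar>s - rho T t\<bar> powr \<alpha>"
  shows "has_nabla_frac_deriv T \<alpha> f t D"
  unfolding has_nabla_frac_deriv_def
proof (intro allI impI)
  fix \<epsilon> :: real assume "\<epsilon> > 0"
  then obtain \<delta> where "\<delta> > 0" "\<forall>s\<in>T. \<bar>s - t\<bar> < \<delta> \<longrightarrow>
      \<bar>(f s - f (rho T t)) - D * fpow \<alpha> (s - rho T t)\<bar> \<le> \<epsilon> * \<bar>s - rho T t\<bar> powr \<alpha>"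
    using assms by blast
  then show "\<exists>\<delta>>0. \<forall>s\<in>T. (if \<alpha> \<in> Aset then t - \<delta> < s \<and> s < t + \<delta> else t \<le> s \<and> s < t + \<delta>) \<longrightarrow>
      \<bar>(f s - f (rho T t)) - D * fpow \<alpha> (s - rho T t)\<bar> \<le> \<epsilon> * \<bar>s - rho T t\<bar> powr \<alpha>"
    by (intro exI[of _ \<delta>]) (auto split: if_splits)
qed

lemma abs_le_mult_abs_powr:
  fixes u \<alpha> \<epsilon> :: real
  assumes "\<alpha> < 1" "\<epsilon> > 0" "\<bar>u\<bar> \<le> \<epsilon> powr (1 / (1 - \<alpha>))"
  shows "\<bar>u\<bar> \<le> \<epsilon> * \<bar>u\<bar> powr \<alpha>"
proof (cases "u = 0")
  case False
  have "\<bar>u\<bar> powr (1 - \<alpha>) \<le> (\<epsilon> powr (1 / (1 - \<alpha>))) powr (1 - \<alpha>)"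
    using assms by (intro powr_mono2) auto
  also have "\<dots> = \<epsilon>" using assms by (simp add: powr_powr)
  finally have "\<bar>u\<bar> powr (1 - \<alpha>) * \<bar>u\<bar> powr \<alpha> \<le> \<epsilon> * \<bar>u\<bar> powr \<alpha>"
    by (intro mult_right_mono) auto
  then show ?thesis using False by (simp add: powr_add[symmetric])
qed simp

lemma has_nabla_frac_deriv_id_order_one: "has_nabla_frac_deriv T 1 (\<lambda>s. s) t 1"
  by (rule has_nabla_frac_derivI) auto

lemma has_nabla_frac_deriv_id_left_dense:
  assumes "\<alpha> < 1" "rho T t = t"
  shows "has_nabla_frac_deriv T \<alpha> (\<lambda>s. s) t 0"
proof (rule has_nabla_frac_derivI)
  fix \<epsilon> :: real assume "\<epsilon> > 0"
  then show "\<exists>\<delta>>0. \<forall>s\<in>T. \<bar>s - t\<bar> < \<delta> \<longrightarrow>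
      \<bar>(s - rho T t) - 0 * fpow \<alpha> (s - rho T t)\<bar> \<le> \<epsilon> * \<bar>s - rho T t\<bar> powr \<alpha>"
    using assms abs_le_mult_abs_powr[OF assms(1) \<open>\<epsilon> > 0\<close>]
    by (intro exI[of _ "\<epsilon> powr (1 / (1 - \<alpha>))"]) auto
qed

lemma has_nabla_frac_deriv_id_left_scattered:
  assumes "\<alpha> > 0" "rho T t < t"
  shows "has_nabla_frac_deriv T \<alpha> (\<lambda>s. s) t ((t - rho T t) powr (1 - \<alpha>))"
proof (rule has_nabla_frac_derivI)
  fix \<epsilon> :: real assume "\<epsilon> > 0"
  define r where "r = rho T t"
  define h where "h = t - r"
  have h: "h > 0" using assms by (simp add: h_def r_def)
  define g where "g s = (s - r) - h powr (1 - \<alpha>) * (s - r) powr \<alpha>" for s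
  have "g t = 0" using h by (simp add: g_def h_def[symmetric] powr_add[symmetric])
  moreover have "isCont g t" unfolding g_def using h by (intro continuous_intros) (auto simp: h_def)
  moreover have "\<epsilon> * h powr \<alpha> > 0" using \<open>\<epsilon> > 0\<close> h by simp
  ultimately obtain d where "d > 0" and d: "\<And>s. \<bar>s - t\<bar> < d \<Longrightarrow> \<bar>g s\<bar> < \<epsilon> * h powr \<alpha>"
    unfolding continuous_at_eps_delta dist_real_def by force
  have "\<bar>(s - r) - h powr (1 - \<alpha>) * fpow \<alpha> (s - r)\<bar> \<le> \<epsilon> * \<bar>s - r\<bar> powr \<alpha>"
    if "s \<in> T" "\<bar>s - t\<bar> < min d h" for s
  proof -
    have "t \<le> s" using ge_if_dist_lt_left_gap[OF that(1), of t] that(2) by (simp add: h_def r_def)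
    then have "h \<le> s - r" "s - r > 0" using h by (auto simp: h_def)
    have "\<bar>g s\<bar> \<le> \<epsilon> * h powr \<alpha>" using d[of s] that(2) by simp
    also have "\<dots> \<le> \<epsilon> * \<bar>s - r\<bar> powr \<alpha>"
      using \<open>h \<le> s - r\<close> \<open>\<epsilon> > 0\<close> h assms(1) by (intro mult_left_mono powr_mono2) auto
    finally show ?thesis using \<open>s - r > 0\<close> by (simp add: g_def fpow_pos)
  qed
  moreover have "min d h > 0" using \<open>d > 0\<close> h by simp
  ultimately show "\<exists>\<delta>>0. \<forall>s\<in>T. \<bar>s - t\<bar> < \<delta> \<longrightarrow>
      \<bar>(s - rho T t) - (t - rho T t) powr (1 - \<alpha>) * fpow \<alpha> (s - rho T t)\<bar>
        \<le> \<epsilon> * \<bar>s - rho T t\<bar> powr \<alpha>"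
    unfolding r_def[symmetric] h_def[symmetric] by blast
qed

theorem proposition3p6:
  fixes T :: "real set" and \<alpha> t :: real
  assumes "time_scale T" and "0 < \<alpha>" and "\<alpha> \<le> 1" and "t \<in> T_kappa T"
  shows "has_nabla_frac_deriv T \<alpha> (\<lambda>s. s) t
           (if \<alpha> \<noteq> 1 then (t - rho T t) powr (1 - \<alpha>) else 1)"
proof -
  have "rho T t \<le> t" using assms(4) T_kappa_subset rho_le by blast
  then consider "\<alpha> = 1" | "\<alpha> < 1" "rho T t = t" | "\<alpha> < 1" "rho T t < t"
    using assms(3) by linarith
  then show ?thesis
  proof cases
    case 1
    then show ?thesis using has_nabla_frac_deriv_id_order_one by simp
  next
    case 2
    then show ?thesis using has_nabla_frac_deriv_id_left_dense[of \<alpha> T t] by simp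
  next
    case 3
    then show ?thesis using has_nabla_frac_deriv_id_left_scattered[OF assms(2)] by simp
  qed
qed

end
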